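(* Let $p$ be an odd prime. Then the power series \[ \sum_{s=0}^{\infty}\frac{X^{sp}}{(sp)!}\cdot\sum_{r=0}^{\infty}\frac{(-X)^{rp}}{(rp)!}\cdot\sum_{i=1}^{\infty}X^{p^i}\in\mathbb{Q}[[X]] \] has $p$-integral coefficients, and it is congruent to $X^p$ modulo $p$ (i.e. its reduction modulo $p$ in $\mathbb{F}_p[[X]]$ equals $X^p$). *)

theory Defs
  imports "HOL-Computational_Algebra.Computational_Algebra" "HOL-Computational_Algebra.Primes"
begin

definition p_integral :: "nat \<Rightarrow> rat \<Rightarrow> bool" where
  "p_integral p q \<longleftrightarrow> \<not> int p dvd snd (quotient_of q)"

definition exp_p :: "nat \<Rightarrow> rat fps" where
  "exp_p p = Abs_fps (\<lambda>n. if p dvd n then 1 / fact n else 0)"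

definition exp_p_neg :: "nat \<Rightarrow> rat fps" where
  "exp_p_neg p = Abs_fps (\<lambda>n. if p dvd n then (-1) ^ n / fact n else 0)"

definition pow_series :: "nat \<Rightarrow> rat fps" where
  "pow_series p = Abs_fps (\<lambda>n. if \<exists>i\<ge>1. n = p ^ i then 1 else 0)"

end

theory Submission
  imports Defs "HOL-Number_Theory.Residues"
begin

hide_const (open) up_ring.coeff up_ring.monom module.smult

text \<open>
  Write \<open>G = exp_p p * exp_p_neg p\<close>, so that the \<open>n\<close>-th coefficient of the series is the sum
  of \<open>G_(n - p^i)\<close> over \<open>i \<ge> 1\<close>. For \<open>p dvd m\<close>, \<open>m! G_m\<close> is the alternating sum of the binomial
  coefficients \<open>m choose i\<close> over \<open>p dvd i\<close>, i.e. the value at \<open>X^m\<close> of the functional sending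
  \<open>f\<close> to the sum of the coefficients of \<open>f(X - 1)\<close> at multiples of \<open>p\<close>. This functional kills
  the multiples of \<open>(X + 1)^p - 1 = X^p + p X g(X)\<close>,
  hence \<open>m! G_m = (-p)^v T\<close> where \<open>v = (m - s)/(p - 1)\<close> is the exponent of \<open>p\<close> in \<open>m!\<close> and
  \<open>s\<close> the base-\<open>p\<close> digit sum of \<open>m\<close>; a derivative identity for \<open>g\<close> shows that
  \<open>T = [s = p - 1]\<close> modulo \<open>p\<close>. Together with the Anton-Stickelberger congruence for
  \<open>m!/p^v\<close>, \<open>G_m\<close> is \<open>p\<close>-integral and congruent to the inverse of the product of the
  factorials of the digits of \<open>m\<close> if \<open>s = p - 1\<close>, and to \<open>0\<close> otherwise. Subtracting \<open>p^i\<close>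
  from \<open>n\<close> changes its digits in a controlled way, and summing these residues over \<open>i\<close>
  leaves \<open>[n = p]\<close> modulo \<open>p\<close>; for \<open>n = p^j\<close> with \<open>j \<ge> 2\<close> this is Wilson's theorem.
\<close>

section \<open>\<open>p\<close>-integral rationals\<close>

lemma p_integral_iff_frac:
  "p_integral p x \<longleftrightarrow> (\<exists>a b. \<not> int p dvd b \<and> x = of_int a / of_int b)"
proof
  assume "p_integral p x"
  then show "\<exists>a b. \<not> int p dvd b \<and> x = of_int a / of_int b"
    unfolding p_integral_def by (metis quotient_of_div surj_pair snd_conv)
next
  assume "\<exists>a b. \<not> int p dvd b \<and> x = of_int a / of_int b"
  then obtain a b where ab: "\<not> int p dvd b" "x = of_int a / of_int b" by blast
  obtain n d where nd: "quotient_of x = (n, d)" by (cases "quotient_of x")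
  have "b \<noteq> 0" using ab by auto
  moreover have "x = of_int n / of_int d" "d > 0"
    using quotient_of_div[OF nd] quotient_of_denom_pos[OF nd] by auto
  ultimately have "a * d = n * b" using ab by (simp add: frac_eq_eq flip: of_int_mult)
  then have "d dvd b"
    using quotient_of_coprime[OF nd]
    by (metis coprime_commute coprime_dvd_mult_right_iff dvd_triv_right)
  then show "p_integral p x" using ab(1) nd unfolding p_integral_def by (auto dest: dvd_trans)
qed

lemma p_integral_frac: "\<not> int p dvd b \<Longrightarrow> p_integral p (of_int a / of_int b)"
  unfolding p_integral_iff_frac by blast

lemma p_integral_of_int: "prime p \<Longrightarrow> p_integral p (of_int a)"
  using p_integral_frac[of p 1 a] prime_gt_1_nat[of p] by simp

lemma p_integral_0: "prime p \<Longrightarrow> p_integral p 0"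
  using p_integral_of_int[of p 0] by simp

lemma p_integral_add:
  assumes "prime p" "p_integral p x" "p_integral p y"
  shows "p_integral p (x + y)"
proof -
  obtain a b c d where x: "\<not> int p dvd b" "x = of_int a / of_int b"
    and y: "\<not> int p dvd d" "y = of_int c / of_int d"
    using assms unfolding p_integral_iff_frac by blast
  have "b \<noteq> 0" "d \<noteq> 0" using x y by auto
  then have "x + y = of_int (a * d + c * b) / of_int (b * d)"
    using x y by (simp add: field_simps)
  moreover have "\<not> int p dvd b * d" using x y assms(1) by (simp add: prime_dvd_mult_iff)
  ultimately show ?thesis using p_integral_frac by metis
qed

lemma p_integral_sum:
  "prime p \<Longrightarrow> (\<And>i. i \<in> A \<Longrightarrow> p_integral p (f i)) \<Longrightarrow> p_integral p (\<Sum>i\<in>A. f i)"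
  by (induction A rule: infinite_finite_induct) (auto intro: p_integral_add p_integral_0)

lemma p_integral_diff_frac_div:
  assumes "prime p" "\<not> int p dvd b" "\<not> int p dvd d" "[a * d = c * b] (mod int p)"
  shows "p_integral p ((of_int a / of_int b - of_int c / of_int d) / of_nat p)"
proof -
  obtain k where k: "a * d - c * b = int p * k"
    using assms(4) by (metis cong_iff_dvd_diff cong_sym dvdE)
  have "b \<noteq> 0" "d \<noteq> 0" "p \<noteq> 0" using assms by auto
  then have "(of_int a / of_int b - of_int c / of_int d) / of_nat p
      = (of_int (a * d - c * b) / of_int (b * d) :: rat) / of_nat p"
    by (simp add: field_simps)
  also have "\<dots> = of_int k / of_int (b * d)"
    using \<open>p \<noteq> 0\<close> unfolding k by (simp add: field_simps)
  finally show ?thesis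
    using assms(1-3) p_integral_frac[of p "b * d" k] by (simp add: prime_dvd_mult_iff)
qed

section \<open>Base-\<open>p\<close> digits\<close>

fun digit_sum :: "nat \<Rightarrow> nat \<Rightarrow> nat" where
  "digit_sum p n = (if p < 2 \<or> n = 0 then 0 else n mod p + digit_sum p (n div p))"

fun digit_fact :: "nat \<Rightarrow> nat \<Rightarrow> nat" where
  "digit_fact p n = (if p < 2 \<or> n = 0 then 1 else fact (n mod p) * digit_fact p (n div p))"

declare digit_sum.simps[simp del] digit_fact.simps[simp del]

definition digit :: "nat \<Rightarrow> nat \<Rightarrow> nat \<Rightarrow> nat" where
  "digit p i n = n div p ^ i mod p"

lemma digit_sum_0 [simp]: "digit_sum p 0 = 0"
  by (simp add: digit_sum.simps)

lemma digit_fact_0 [simp]: "digit_fact p 0 = 1"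
  by (simp add: digit_fact.simps)

lemma digit_fact_gt_0: "digit_fact p n > 0"
  by (induction p n rule: digit_fact.induct) (simp add: digit_fact.simps)

lemma digit_sum_base_add: "b < p \<Longrightarrow> digit_sum p (p * a + b) = b + digit_sum p a"
  by (cases "p < 2") (auto simp: digit_sum.simps[of p "p * a + b"] digit_sum.simps[of p a])

lemma digit_fact_base_add:
  assumes "b < p"
  shows "digit_fact p (p * a + b) = fact b * digit_fact p a"
proof (cases "p < 2")
  case True
  then have "b = 0" using assms by linarith
  then show ?thesis using True by (simp add: digit_fact.simps)
qed (use assms in \<open>auto simp: digit_fact.simps[of p "p * a + b"] digit_fact.simps[of p a]\<close>)

lemma digit_sum_power_mult_add:
  "r < p ^ i \<Longrightarrow> digit_sum p (p ^ i * a + r) = digit_sum p a + digit_sum p r"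
proof (induction i arbitrary: a r)
  case (Suc i)
  have "p > 0" using Suc.prems by (auto intro: gr0I)
  define r0 r1 where "r0 = r mod p" and "r1 = r div p"
  have r: "r = p * r1 + r0" "r0 < p" "r1 < p ^ i"
    using Suc.prems \<open>p > 0\<close> by (auto simp: r0_def r1_def less_mult_imp_div_less mult.commute)
  have "digit_sum p (p ^ Suc i * a + r) = digit_sum p (p * (p ^ i * a + r1) + r0)"
    by (simp add: r algebra_simps)
  also have "\<dots> = r0 + (digit_sum p a + digit_sum p r1)"
    using r Suc.IH by (simp add: digit_sum_base_add)
  also have "\<dots> = digit_sum p a + digit_sum p r"
    using r by (simp add: digit_sum_base_add)
  finally show ?case .
qed simp

lemma digit_fact_power_mult_add:
  "r < p ^ i \<Longrightarrow> digit_fact p (p ^ i * a + r) = digit_fact p a * digit_fact p r"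
proof (induction i arbitrary: a r)
  case (Suc i)
  have "p > 0" using Suc.prems by (auto intro: gr0I)
  define r0 r1 where "r0 = r mod p" and "r1 = r div p"
  have r: "r = p * r1 + r0" "r0 < p" "r1 < p ^ i"
    using Suc.prems \<open>p > 0\<close> by (auto simp: r0_def r1_def less_mult_imp_div_less mult.commute)
  have "digit_fact p (p ^ Suc i * a + r) = digit_fact p (p * (p ^ i * a + r1) + r0)"
    by (simp add: r algebra_simps)
  also have "\<dots> = fact r0 * (digit_fact p a * digit_fact p r1)"
    using r Suc.IH by (simp add: digit_fact_base_add)
  also have "\<dots> = digit_fact p a * digit_fact p r"
    using r by (simp add: digit_fact_base_add)
  finally show ?case .
qed simp

lemma digit_sum_power_mult: "p > 0 \<Longrightarrow> digit_sum p (p ^ i * a) = digit_sum p a"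
  using digit_sum_power_mult_add[of 0 p i a] by simp

lemma digit_fact_power_mult: "p > 0 \<Longrightarrow> digit_fact p (p ^ i * a) = digit_fact p a"
  using digit_fact_power_mult_add[of 0 p i a] by simp

lemma digit_sum_pos: "p \<ge> 2 \<Longrightarrow> n > 0 \<Longrightarrow> digit_sum p n > 0"
proof (induction n rule: less_induct)
  case (less n)
  then show ?case
    by (cases "n mod p = 0")
       (auto simp: digit_sum.simps[of p n] elim!: dvdE intro!: less.IH)
qed

lemma digit_sum_power: "p \<ge> 2 \<Longrightarrow> digit_sum p (p ^ i) = 1"
  using digit_sum_power_mult[of p i 1] digit_sum_base_add[of 1 p 0] by simp

lemma digit_sum_eq_1_imp_power:
  assumes "p \<ge> 2" "digit_sum p n = 1"
  shows "\<exists>j. n = p ^ j"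
  using assms(2)
proof (induction n rule: less_induct)
  case (less n)
  have "n \<noteq> 0" using less.prems by (metis digit_sum_0 zero_neq_one)
  then have rec: "n mod p + digit_sum p (n div p) = 1" "n div p < n"
    using less.prems assms(1) by (auto simp: digit_sum.simps[of p n])
  show ?case
  proof (cases "n mod p = 0")
    case True
    then obtain j where "n div p = p ^ j" using rec less.IH by auto
    then have "n = p ^ Suc j"
      using True by (metis div_mult_mod_eq add_0_right mult.commute power_Suc)
    then show ?thesis by blast
  next
    case False
    then have "n div p = 0" using rec digit_sum_pos[OF assms(1), of "n div p"] by auto
    moreover from this have "n mod p = 1" using rec by simp
    ultimately have "n = p ^ 0" using div_mult_mod_eq[of n p] by simp
    then show ?thesis by blast
  qed
qed

lemma prime_not_dvd_digit_fact:
  assumes "prime p"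
  shows "\<not> p dvd digit_fact p n"
proof (induction n rule: less_induct)
  case (less n)
  have "p \<ge> 2" using assms prime_ge_2_nat by blast
  show ?case
  proof (cases "n = 0")
    case False
    have "\<not> p dvd fact (n mod p)"
      using assms \<open>p \<ge> 2\<close> by (simp add: prime_dvd_fact_iff not_le)
    then show ?thesis using less \<open>p \<ge> 2\<close> False assms
      by (simp add: digit_fact.simps[of p n] prime_dvd_mult_iff)
  qed (use assms prime_gt_1_nat in auto)
qed

lemma digit_sum_fact_Suc_not_dvd:
  assumes "p \<ge> 2" "\<not> p dvd Suc n"
  shows "digit_sum p (Suc n) = digit_sum p n + 1"
    and "digit_fact p (Suc n) = Suc n mod p * digit_fact p n"
proof -
  define a b where "a = Suc n div p" and "b = Suc n mod p"
  have b: "b \<noteq> 0" "b < p" using assms by (auto simp: b_def dvd_eq_mod_eq_0)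
  have Suc_n: "Suc n = p * a + b" by (simp add: a_def b_def)
  then have n: "n = p * a + (b - 1)" using b by simp
  have "digit_sum p n = (b - 1) + digit_sum p a"
    unfolding n using b by (intro digit_sum_base_add) simp
  moreover have "digit_sum p (Suc n) = b + digit_sum p a"
    unfolding Suc_n using b by (intro digit_sum_base_add)
  ultimately show "digit_sum p (Suc n) = digit_sum p n + 1" using b by simp
  have "digit_fact p n = fact (b - 1) * digit_fact p a"
    unfolding n using b by (intro digit_fact_base_add) simp
  moreover have "digit_fact p (Suc n) = fact b * digit_fact p a"
    unfolding Suc_n using b by (intro digit_fact_base_add)
  moreover have "fact b = b * fact (b - 1)" using b by (simp add: fact_reduce)
  ultimately show "digit_fact p (Suc n) = Suc n mod p * digit_fact p n"
    by (simp add: b_def)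
qed

lemma digit_sum_mult_Suc:
  assumes "p \<ge> 2"
  shows "digit_sum p (p * Suc c) = digit_sum p (Suc c)"
    and "digit_sum p (p * Suc c - 1) = (p - 1) + digit_sum p c"
proof -
  show "digit_sum p (p * Suc c) = digit_sum p (Suc c)"
    using assms digit_sum_base_add[of 0 p "Suc c"] by simp
  have "p * Suc c - 1 = p * c + (p - 1)" using assms by simp
  then show "digit_sum p (p * Suc c - 1) = (p - 1) + digit_sum p c"
    using assms digit_sum_base_add[of "p - 1" p c] by simp
qed

lemma digit_sum_Suc_le: "digit_sum p (Suc n) \<le> digit_sum p n + 1"
proof (induction n rule: less_induct)
  case (less n)
  consider "p < 2" | "p \<ge> 2" "\<not> p dvd Suc n" | c where "p \<ge> 2" "Suc n = p * Suc c"
    by (metis dvdE mult_0_right nat.distinct(1) not0_implies_Suc not_le)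
  then show ?case
  proof cases
    case 1
    then show ?thesis by (simp add: digit_sum.simps)
  next
    case 2
    then show ?thesis by (simp add: digit_sum_fact_Suc_not_dvd)
  next
    case (3 c)
    then have n: "n = p * Suc c - 1" by simp
    have "c \<le> p * c" "n = p + p * c - 1" using 3 by simp_all
    then have "c < n" using 3 by linarith
    have "digit_sum p (Suc n) = digit_sum p (Suc c)" using 3 digit_sum_mult_Suc(1) by simp
    also have "\<dots> \<le> digit_sum p c + 1" using less.IH[OF \<open>c < n\<close>] .
    also have "\<dots> \<le> digit_sum p n + 1" using 3 n digit_sum_mult_Suc(2) by simp
    finally show ?thesis .
  qed
qed

lemma digit_sum_Suc_dvd:
  assumes "p \<ge> 2" "p dvd Suc n"
  shows "digit_sum p (Suc n) + (p - 1) \<le> digit_sum p n + 1"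
proof -
  obtain c where c: "Suc n = p * Suc c"
    using assms(2) by (metis dvdE mult_0_right nat.distinct(1) not0_implies_Suc)
  then have "n = p * Suc c - 1" by simp
  then show ?thesis using c assms(1) digit_sum_mult_Suc digit_sum_Suc_le[of p c] by simp
qed

lemma digit_nonzero_imp_power_le: "digit p i n \<noteq> 0 \<Longrightarrow> p ^ i \<le> n"
  unfolding digit_def by (metis div_less mod_0 not_le)

lemma split_at_digit:
  assumes "p > 0" "p ^ i \<le> n"
  obtains a r where "n = p ^ i * Suc a + r" "n - p ^ i = p ^ i * a + r" "r < p ^ i"
    and "digit p i n = Suc a mod p"
proof -
  have "n div p ^ i \<noteq> 0" using assms by (simp add: div_eq_0_iff)
  then obtain a where a: "n div p ^ i = Suc a" using not0_implies_Suc by blast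
  have "n = p ^ i * Suc a + n mod p ^ i" by (metis a div_mult_mod_eq mult.commute)
  moreover have "n mod p ^ i < p ^ i" using assms(1) by simp
  ultimately show ?thesis using that[of a "n mod p ^ i"] a by (simp add: digit_def)
qed

lemma digit_sum_fact_diff_power_nonzero_digit:
  assumes "p \<ge> 2" "digit p i n \<noteq> 0"
  shows "digit_sum p (n - p ^ i) + 1 = digit_sum p n"
    and "digit_fact p n = digit p i n * digit_fact p (n - p ^ i)"
proof -
  obtain a r where n: "n = p ^ i * Suc a + r" "n - p ^ i = p ^ i * a + r" "r < p ^ i"
    and d: "digit p i n = Suc a mod p"
    using split_at_digit[of p i n] assms digit_nonzero_imp_power_le by auto
  have "\<not> p dvd Suc a" using assms(2) d by (simp add: dvd_eq_mod_eq_0)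
  note Suc_a = digit_sum_fact_Suc_not_dvd[OF assms(1) this]
  have "digit_sum p (n - p ^ i) = digit_sum p a + digit_sum p r"
    unfolding n(2) using n(3) by (rule digit_sum_power_mult_add)
  moreover have "digit_sum p n = digit_sum p (Suc a) + digit_sum p r"
    unfolding n(1) using n(3) by (rule digit_sum_power_mult_add)
  ultimately show "digit_sum p (n - p ^ i) + 1 = digit_sum p n" using Suc_a(1) by simp
  have "digit_fact p (n - p ^ i) = digit_fact p a * digit_fact p r"
    unfolding n(2) using n(3) by (rule digit_fact_power_mult_add)
  moreover have "digit_fact p n = digit_fact p (Suc a) * digit_fact p r"
    unfolding n(1) using n(3) by (rule digit_fact_power_mult_add)
  ultimately show "digit_fact p n = digit p i n * digit_fact p (n - p ^ i)"
    using Suc_a(2) d by simp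
qed

lemma digit_sum_diff_power_zero_digit:
  assumes "p \<ge> 2" "p ^ i \<le> n" "digit p i n = 0"
  shows "digit_sum p n + (p - 1) \<le> digit_sum p (n - p ^ i) + 1"
proof -
  obtain a r where n: "n = p ^ i * Suc a + r" "n - p ^ i = p ^ i * a + r" "r < p ^ i"
    and d: "digit p i n = Suc a mod p"
    using split_at_digit[of p i n] assms by auto
  have "p dvd Suc a" using assms(3) d by (simp add: dvd_eq_mod_eq_0)
  then show ?thesis
    using assms(1) n digit_sum_Suc_dvd[of p a]
      digit_sum_power_mult_add[of r p i a] digit_sum_power_mult_add[of r p i "Suc a"]
    by simp
qed

lemma digit_sum_eq_sum_digits: "n < p ^ L \<Longrightarrow> digit_sum p n = (\<Sum>i<L. digit p i n)"
proof (induction L arbitrary: n)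
  case (Suc L)
  have "p > 0" using Suc.prems by (auto intro: gr0I)
  have "digit_sum p n = digit_sum p (p * (n div p) + n mod p)" by simp
  also have "\<dots> = digit p 0 n + digit_sum p (n div p)"
    using \<open>p > 0\<close> by (simp only: digit_sum_base_add mod_less_divisor) (simp add: digit_def)
  also have "digit_sum p (n div p) = (\<Sum>i<L. digit p i (n div p))"
    using Suc.prems \<open>p > 0\<close> by (intro Suc.IH) (simp add: div_less_iff_less_mult mult.commute)
  also have "\<dots> = (\<Sum>i<L. digit p (Suc i) n)"
    by (simp add: digit_def div_mult2_eq mult.commute)
  also have "digit p 0 n + \<dots> = (\<Sum>i<Suc L. digit p i n)"
    by (rule sum.lessThan_Suc_shift[symmetric])
  finally show ?case .
qed simp

lemma digit_sum_fact_power_minus_1: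
  assumes "p \<ge> 2"
  shows "digit_sum p (p ^ k - 1) = k * (p - 1) \<and> digit_fact p (p ^ k - 1) = fact (p - 1) ^ k"
proof (induction k)
  case (Suc k)
  have "p ^ Suc k - 1 = p * (p ^ k - 1) + (p - 1)"
    using assms by (simp add: diff_mult_distrib2 Suc_leI)
  then show ?case
    using Suc.IH assms digit_sum_base_add[of "p - 1" p "p ^ k - 1"]
      digit_fact_base_add[of "p - 1" p "p ^ k - 1"]
    by (simp add: algebra_simps)
qed simp

lemma digit_sum_power_diff:
  assumes "p \<ge> 2" "i \<le> j"
  shows "digit_sum p (p ^ j - p ^ i) = (j - i) * (p - 1)"
proof -
  have "p ^ j - p ^ i = p ^ i * (p ^ (j - i) - 1)"
    using assms by (simp add: diff_mult_distrib2 power_add[symmetric])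
  then show ?thesis using assms digit_sum_power_mult digit_sum_fact_power_minus_1 by simp
qed

lemma digit_fact_power_Suc_diff:
  assumes "p \<ge> 2"
  shows "digit_fact p (p ^ Suc i - p ^ i) = fact (p - 1)"
proof -
  have "p ^ Suc i - p ^ i = p ^ i * (p ^ 1 - 1)"
    by (simp add: diff_mult_distrib2 mult.commute)
  then show ?thesis using assms digit_fact_power_mult digit_sum_fact_power_minus_1[of p 1] by simp
qed

section \<open>Factorials modulo \<open>p\<close>\<close>

lemma fact_add_eq_prod: "fact (m + k) = (fact m :: nat) * (\<Prod>j=1..k. m + j)"
proof (induction k)
  case (Suc k)
  have "fact (m + Suc k) = (m + Suc k) * fact (m + k)" by (simp add: fact_Suc)
  also have "\<dots> = fact m * (\<Prod>j=1..Suc k. m + j)"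
    using Suc by (simp add: prod.cl_ivl_Suc algebra_simps)
  finally show ?case .
qed simp

lemma cong_prod_shift_fact: "[(\<Prod>j=1..k. int (p * a + j)) = fact k] (mod int p)"
proof -
  have "[(\<Prod>j=1..k. int (p * a + j)) = (\<Prod>j=1..k. int j)] (mod int p)"
    by (rule cong_prod) (simp add: cong_def)
  then show ?thesis by (simp add: fact_prod)
qed

lemma fact_mult_add_prime:
  assumes "prime p" "b < p"
  shows "\<exists>N. fact (p * a + b) = p ^ a * fact a * N \<and> [int N = (-1) ^ a * fact b] (mod int p)"
  using assms(2)
proof (induction a arbitrary: b)
  case 0
  then show ?case by (auto intro!: exI[of _ "fact b"])
next
  case (Suc a)
  have "p \<ge> 2" using assms prime_ge_2_nat by blast
  obtain N0 where N0: "fact (p * a) = p ^ a * fact a * N0" "[int N0 = (-1) ^ a] (mod int p)"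
    using Suc.IH[of 0] \<open>p \<ge> 2\<close> by auto
  define M1 where "M1 = (\<Prod>j=1..p-1. p * a + j)"
  define M2 where "M2 = (\<Prod>j=1..b. p * Suc a + j)"
  have "fact (p * Suc a) = fact (Suc (p * a + (p - 1)))"
    using \<open>p \<ge> 2\<close> by (simp add: algebra_simps)
  also have "\<dots> = p * Suc a * fact (p * a) * M1"
    using \<open>p \<ge> 2\<close> by (simp only: fact_Suc fact_add_eq_prod M1_def) simp
  finally have "fact (p * Suc a + b) = p * Suc a * fact (p * a) * M1 * M2"
    by (simp add: fact_add_eq_prod M2_def)
  also have "\<dots> = p ^ Suc a * fact (Suc a) * (N0 * M1 * M2)"
    unfolding N0(1) by (simp add: fact_Suc algebra_simps)
  finally have eq: "fact (p * Suc a + b) = p ^ Suc a * fact (Suc a) * (N0 * M1 * M2)" .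
  have "[int M1 = fact (p - 1)] (mod int p)" "[int M2 = fact b] (mod int p)"
    unfolding M1_def M2_def of_nat_prod by (rule cong_prod_shift_fact)+
  then have "[int M1 = -1] (mod int p)" "[int M2 = fact b] (mod int p)"
    using cong_trans wilson_theorem[OF assms(1)] by blast+
  then have "[int N0 * int M1 * int M2 = (-1) ^ a * (-1) * fact b] (mod int p)"
    by (intro cong_mult N0(2))
  then have "[int (N0 * M1 * M2) = (-1) ^ Suc a * fact b] (mod int p)"
    by (simp add: mult_ac)
  with eq show ?case by blast
qed

text \<open>Legendre's formula together with the congruence of Anton and Stickelberger.\<close>

lemma fact_prime_power_decomp:
  assumes "prime p"
  shows "\<exists>v w. fact n = p ^ v * w \<and> (p - 1) * v + digit_sum p n = n
            \<and> [int w = (-1) ^ v * int (digit_fact p n)] (mod int p)"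
proof (induction n rule: less_induct)
  case (less n)
  have "p \<ge> 2" using assms prime_ge_2_nat by blast
  show ?case
  proof (cases "n = 0")
    case True
    then show ?thesis by (intro exI[of _ 0] exI[of _ 1]) simp
  next
    case False
    define a b where "a = n div p" and "b = n mod p"
    have n: "n = p * a + b" "b < p" "a < n"
      using \<open>p \<ge> 2\<close> False by (auto simp: a_def b_def)
    obtain N where N: "fact n = p ^ a * fact a * N" "[int N = (-1) ^ a * fact b] (mod int p)"
      using fact_mult_add_prime[OF assms n(2), of a] n(1) by auto
    obtain v w where vw: "fact a = p ^ v * w" "(p - 1) * v + digit_sum p a = a"
       "[int w = (-1) ^ v * int (digit_fact p a)] (mod int p)"
      using less.IH[OF n(3)] by blast
    have ds: "digit_sum p n = b + digit_sum p a"
      unfolding n(1) using n(2) by (rule digit_sum_base_add)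
    have df: "digit_fact p n = fact b * digit_fact p a"
      unfolding n(1) using n(2) by (rule digit_fact_base_add)
    have "fact n = p ^ (a + v) * (w * N)"
      using N(1) vw(1) by (simp add: power_add algebra_simps)
    moreover have "(p - 1) * (a + v) + digit_sum p n = n"
    proof -
      have "(p - 1) * a + a = p * a" using \<open>p \<ge> 2\<close> by (cases p) auto
      then show ?thesis using vw(2) n(1) ds by (simp add: add_mult_distrib2)
    qed
    moreover have "[int (w * N) = (-1) ^ (a + v) * int (digit_fact p n)] (mod int p)"
    proof -
      have "[int w * int N = ((-1) ^ v * int (digit_fact p a)) * ((-1) ^ a * fact b)] (mod int p)"
        by (intro cong_mult vw(3) N(2))
      then show ?thesis using df by (simp add: power_add mult_ac)
    qed
    ultimately show ?thesis by blast
  qed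
qed

section \<open>Alternating sums of binomial coefficients over multiples of \<open>p\<close>\<close>

definition dvd_coeff_sum :: "nat \<Rightarrow> int poly \<Rightarrow> int" where
  "dvd_coeff_sum p F = (\<Sum>i\<le>degree F. if p dvd i then coeff F i else 0)"

definition shifted_dvd_coeff_sum :: "nat \<Rightarrow> int poly \<Rightarrow> int" where
  "shifted_dvd_coeff_sum p f = dvd_coeff_sum p (pcompose f [:-1, 1:])"

definition alt_binom_dvd_sum :: "nat \<Rightarrow> nat \<Rightarrow> int" where
  "alt_binom_dvd_sum p m = (\<Sum>i\<le>m. if p dvd i then (-1) ^ (m - i) * int (m choose i) else 0)"

lemma dvd_coeff_sum_bound:
  assumes "degree F \<le> N"
  shows "dvd_coeff_sum p F = (\<Sum>i\<le>N. if p dvd i then coeff F i else 0)"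
  unfolding dvd_coeff_sum_def
  by (rule sum.mono_neutral_left) (use assms in \<open>auto simp: coeff_eq_0\<close>)

lemma dvd_coeff_sum_0 [simp]: "dvd_coeff_sum p 0 = 0"
  by (simp add: dvd_coeff_sum_def)

lemma dvd_coeff_sum_add: "dvd_coeff_sum p (F + G) = dvd_coeff_sum p F + dvd_coeff_sum p G"
proof -
  define N where "N = max (degree F) (degree G)"
  have "degree (F + G) \<le> N" unfolding N_def by (rule degree_add_le) auto
  then show ?thesis
    using dvd_coeff_sum_bound[of F N p] dvd_coeff_sum_bound[of G N p]
      dvd_coeff_sum_bound[of "F + G" N p]
    by (simp add: N_def sum.distrib[symmetric] if_distrib cong: if_cong)
qed

lemma dvd_coeff_sum_smult: "dvd_coeff_sum p (smult a F) = a * dvd_coeff_sum p F"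
  using dvd_coeff_sum_bound[OF degree_smult_le, of p a F]
  by (simp add: dvd_coeff_sum_def sum_distrib_left if_distrib cong: if_cong)

lemma dvd_coeff_sum_diff: "dvd_coeff_sum p (F - G) = dvd_coeff_sum p F - dvd_coeff_sum p G"
  using dvd_coeff_sum_add[of p F "- G"] dvd_coeff_sum_smult[of p "-1" G] by simp

lemma dvd_coeff_sum_sum: "dvd_coeff_sum p (\<Sum>x\<in>A. f x) = (\<Sum>x\<in>A. dvd_coeff_sum p (f x))"
  by (induction A rule: infinite_finite_induct) (auto simp: dvd_coeff_sum_add)

lemma sum_atMost_add_split:
  "(\<Sum>i\<le>N + p. g i) = (\<Sum>i<p. g i) + (\<Sum>i\<le>N. g (i + p :: nat))"
  by (induction N) (auto simp: lessThan_Suc_atMost[symmetric] add.commute add.left_commute)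

lemma dvd_coeff_sum_monom_mult:
  assumes "p \<ge> 1"
  shows "dvd_coeff_sum p (monom 1 p * F) = dvd_coeff_sum p F"
proof -
  have "degree (monom 1 p * F) \<le> degree F + p"
    using degree_mult_le[of "monom 1 p" F] by (simp add: degree_monom_eq)
  then have "dvd_coeff_sum p (monom 1 p * F)
      = (\<Sum>i\<le>degree F + p. if p dvd i then coeff (monom 1 p * F) i else 0)"
    by (rule dvd_coeff_sum_bound)
  also have "\<dots> = (\<Sum>i<p. if p dvd i then coeff (monom 1 p * F) i else 0)
      + (\<Sum>i\<le>degree F. if p dvd (i + p) then coeff (monom 1 p * F) (i + p) else 0)"
    by (rule sum_atMost_add_split)
  also have "(\<Sum>i<p. if p dvd i then coeff (monom 1 p * F) i else 0) = 0"
    by (intro sum.neutral) (auto simp: coeff_monom_mult)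
  also have "(\<Sum>i\<le>degree F. if p dvd (i + p) then coeff (monom 1 p * F) (i + p) else 0)
      = dvd_coeff_sum p F"
    unfolding dvd_coeff_sum_def by (intro sum.cong) (auto simp: coeff_monom_mult)
  finally show ?thesis by simp
qed

lemma pcompose_power_left: "pcompose (q ^ n) r = (pcompose q r) ^ n"
  by (induction n) (auto simp: pcompose_mult pcompose_1)

lemma shifted_dvd_coeff_sum_add:
  "shifted_dvd_coeff_sum p (f + g) = shifted_dvd_coeff_sum p f + shifted_dvd_coeff_sum p g"
  unfolding shifted_dvd_coeff_sum_def by (simp add: pcompose_add dvd_coeff_sum_add)

lemma shifted_dvd_coeff_sum_smult:
  "shifted_dvd_coeff_sum p (smult a f) = a * shifted_dvd_coeff_sum p f"
  unfolding shifted_dvd_coeff_sum_def by (simp add: pcompose_smult dvd_coeff_sum_smult)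

lemma shifted_dvd_coeff_sum_diff:
  "shifted_dvd_coeff_sum p (f - g) = shifted_dvd_coeff_sum p f - shifted_dvd_coeff_sum p g"
  unfolding shifted_dvd_coeff_sum_def by (simp add: pcompose_diff dvd_coeff_sum_diff)

lemma shifted_dvd_coeff_sum_sum:
  "shifted_dvd_coeff_sum p (\<Sum>x\<in>A. f x) = (\<Sum>x\<in>A. shifted_dvd_coeff_sum p (f x))"
  unfolding shifted_dvd_coeff_sum_def by (simp add: pcompose_sum dvd_coeff_sum_sum)

lemma alt_binom_dvd_sum_eq_dvd_coeff_sum:
  "alt_binom_dvd_sum p m = dvd_coeff_sum p ([:-1, 1:] ^ m)"
proof -
  have "degree ([:-1, 1:] ^ m :: int poly) = m" using degree_linear_power[of "-1" m] by simp
  then show ?thesis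
    unfolding alt_binom_dvd_sum_def dvd_coeff_sum_def
    by (intro sum.cong) (auto simp: coeff_linear_poly_power mult.commute)
qed

lemma shifted_dvd_coeff_sum_monom:
  "shifted_dvd_coeff_sum p (monom a j) = a * alt_binom_dvd_sum p j"
  unfolding shifted_dvd_coeff_sum_def alt_binom_dvd_sum_eq_dvd_coeff_sum
  by (simp add: monom_altdef pcompose_smult pcompose_power_left dvd_coeff_sum_smult pcompose_pCons)

lemma shifted_dvd_coeff_sum_eq_sum:
  assumes "degree f \<le> N"
  shows "shifted_dvd_coeff_sum p f = (\<Sum>j\<le>N. coeff f j * alt_binom_dvd_sum p j)"
proof -
  have "f = (\<Sum>j\<le>N. monom (coeff f j) j)"
    using assms by (metis poly_as_sum_of_monoms')
  then show ?thesis
    by (metis (no_types, lifting) shifted_dvd_coeff_sum_sum shifted_dvd_coeff_sum_monom sum.cong)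
qed

text \<open>The shift \<open>X \<mapsto> X - 1\<close> turns \<open>(X + 1) ^ p - 1\<close> into \<open>X ^ p - 1\<close>, and multiplication by
  \<open>X ^ p\<close> does not change the sum of the coefficients at multiples of \<open>p\<close>.\<close>

lemma shifted_dvd_coeff_sum_mult_power_minus_1:
  assumes "p \<ge> 1"
  shows "shifted_dvd_coeff_sum p (f * ([:1, 1:] ^ p - 1)) = 0"
proof -
  have "pcompose [:1, 1:] [:-1, 1:] = ([:0, 1:] :: int poly)" by (simp add: pcompose_pCons)
  then have "pcompose (f * ([:1, 1:] ^ p - 1)) [:-1, 1:]
      = monom 1 p * pcompose f [:-1, 1:] - pcompose f [:-1, 1:]"
    by (simp add: pcompose_mult pcompose_diff pcompose_power_left pcompose_1 monom_altdef
        algebra_simps)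
  then show ?thesis
    unfolding shifted_dvd_coeff_sum_def using dvd_coeff_sum_monom_mult[OF assms]
    by (simp add: dvd_coeff_sum_diff)
qed

lemma alt_binom_dvd_sum_0 [simp]: "alt_binom_dvd_sum p 0 = 1"
  by (simp add: alt_binom_dvd_sum_def)

lemma alt_binom_dvd_sum_less:
  assumes "j < p"
  shows "alt_binom_dvd_sum p j = (-1) ^ j"
proof -
  have "i = 0" if "i \<le> j" "p dvd i" for i
    using that assms by (metis dvd_imp_le gr0I le_trans not_le)
  then have "alt_binom_dvd_sum p j = (\<Sum>i\<le>j. if i = 0 then (-1) ^ j else 0)"
    unfolding alt_binom_dvd_sum_def by (intro sum.cong) auto
  then show ?thesis by simp
qed

definition binom_quot_poly :: "nat \<Rightarrow> int poly" where
  "binom_quot_poly p = (\<Sum>k<p - 1. monom (int (p choose (k + 1)) div int p) k)"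

lemma coeff_binom_quot_poly:
  "coeff (binom_quot_poly p) i = (if i < p - 1 then int (p choose (i + 1)) div int p else 0)"
  unfolding binom_quot_poly_def coeff_sum by (simp add: coeff_monom)

lemma binom_power_minus_1_eq:
  assumes "prime p"
  shows "[:1, 1:] ^ p - 1 = monom 1 p + smult (int p) (monom 1 1 * binom_quot_poly p)"
proof (rule poly_eqI)
  fix k
  have "p \<ge> 2" using assms prime_ge_2_nat by blast
  have lhs: "coeff ([:1, 1:] ^ p - 1 :: int poly) k
      = (if k \<le> p \<and> k \<noteq> 0 then int (p choose k) else 0)"
    by (cases "k \<le> p") (auto simp: coeff_linear_poly_power coeff_eq_0 degree_linear_power)
  have "int p dvd int (p choose k)" if "0 < k" "k < p"
    using dvd_choose_prime[of k p] that assms by auto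
  then show "coeff ([:1, 1:] ^ p - 1) k
      = coeff (monom 1 p + smult (int p) (monom 1 1 * binom_quot_poly p)) k"
    using \<open>p \<ge> 2\<close> unfolding lhs
    by (cases k) (auto simp: coeff_monom_mult coeff_binom_quot_poly not_less)
qed

text \<open>Modulo \<open>(X + 1) ^ p - 1 = X ^ p + p X g\<close> with \<open>g = binom_quot_poly p\<close>, the monomial
  \<open>X ^ (k + (p - 1) q)\<close> can be replaced by \<open>X ^ k (- p g) ^ q\<close> as long as \<open>k \<ge> 1\<close>.\<close>

lemma alt_binom_dvd_sum_reduce:
  assumes "prime p" "k \<ge> 1"
  shows "alt_binom_dvd_sum p (k + (p - 1) * q)
    = (- int p) ^ q * shifted_dvd_coeff_sum p (monom 1 k * binom_quot_poly p ^ q)"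
proof -
  have "p \<ge> 2" using assms prime_ge_2_nat by blast
  define a where "a = (monom 1 (p - 1) :: int poly)"
  define b where "b = - smult (int p) (binom_quot_poly p)"
  obtain S where S: "a ^ q - b ^ q = (a - b) * S"
    using power_diff_sumr2[of a q b] by blast
  have Phi: "monom 1 1 * (a - b) = [:1, 1:] ^ p - 1"
    using \<open>p \<ge> 2\<close> unfolding binom_power_minus_1_eq[OF assms(1)] a_def b_def
    by (simp add: ring_distribs mult_monom)
  have "monom 1 (k + (p - 1) * q) - monom 1 k * b ^ q = monom 1 k * (a ^ q - b ^ q)"
    unfolding a_def by (simp add: monom_power mult_monom right_diff_distrib)
  also have "\<dots> = monom 1 (k - 1) * (monom 1 1 * (a - b)) * S"
    using assms(2) by (simp add: S mult_monom mult.assoc)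
  also have "\<dots> = monom 1 (k - 1) * S * ([:1, 1:] ^ p - 1)"
    unfolding Phi by (simp only: mult_ac)
  finally have "monom 1 (k + (p - 1) * q) - monom 1 k * b ^ q
      = monom 1 (k - 1) * S * ([:1, 1:] ^ p - 1)" .
  then have "shifted_dvd_coeff_sum p (monom 1 (k + (p - 1) * q) - monom 1 k * b ^ q) = 0"
    using shifted_dvd_coeff_sum_mult_power_minus_1[of p "monom 1 (k - 1) * S"] \<open>p \<ge> 2\<close>
    by simp
  then have "shifted_dvd_coeff_sum p (monom 1 (k + (p - 1) * q))
      = shifted_dvd_coeff_sum p (monom 1 k * b ^ q)"
    by (simp add: shifted_dvd_coeff_sum_diff)
  moreover have "b ^ q = smult ((- int p) ^ q) (binom_quot_poly p ^ q)"
    unfolding b_def by (simp add: smult_power[symmetric])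
  ultimately show ?thesis
    by (simp add: shifted_dvd_coeff_sum_monom shifted_dvd_coeff_sum_smult[symmetric]
        mult_smult_right)
qed

lemma alt_binom_dvd_sum_dvd:
  assumes "prime p" "j \<ge> p"
  shows "int p dvd alt_binom_dvd_sum p j"
proof -
  have "p \<ge> 2" using assms prime_ge_2_nat by blast
  have "monom 1 (j - p) * ([:1, 1:] ^ p - 1)
      = monom 1 j + smult (int p) (monom 1 (Suc (j - p)) * binom_quot_poly p)"
    unfolding binom_power_minus_1_eq[OF assms(1)] using assms(2)
    by (simp add: ring_distribs mult_monom mult_smult_right flip: mult.assoc)
  then have "alt_binom_dvd_sum p j
      = - (int p * shifted_dvd_coeff_sum p (monom 1 (Suc (j - p)) * binom_quot_poly p))"
    using shifted_dvd_coeff_sum_mult_power_minus_1[of p "monom 1 (j - p)"] \<open>p \<ge> 2\<close>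
    by (simp add: shifted_dvd_coeff_sum_add shifted_dvd_coeff_sum_smult
        shifted_dvd_coeff_sum_monom eq_neg_iff_add_eq_0)
  then show ?thesis by simp
qed

lemma shifted_dvd_coeff_sum_monom_mult_cong:
  assumes "prime p" "k \<ge> 1"
  shows "[shifted_dvd_coeff_sum p (monom 1 k * h)
    = (\<Sum>j\<in>{k..<p}. coeff h (j - k) * (-1) ^ j)] (mod int p)"
proof -
  define f where "f = monom 1 k * h"
  define N where "N = degree f + p"
  have "shifted_dvd_coeff_sum p f = (\<Sum>j\<le>N. coeff f j * alt_binom_dvd_sum p j)"
    by (rule shifted_dvd_coeff_sum_eq_sum) (simp add: N_def)
  also have "[\<dots> = (\<Sum>j\<le>N. if k \<le> j \<and> j < p then coeff h (j - k) * (-1) ^ j else 0)] (mod int p)"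
  proof (rule cong_sum)
    fix j
    show "[coeff f j * alt_binom_dvd_sum p j
      = (if k \<le> j \<and> j < p then coeff h (j - k) * (-1) ^ j else 0)] (mod int p)"
    proof (cases "j < p")
      case True
      then show ?thesis by (simp add: f_def alt_binom_dvd_sum_less coeff_monom_mult)
    next
      case False
      then show ?thesis using alt_binom_dvd_sum_dvd[OF assms(1)] by (simp add: cong_0_iff)
    qed
  qed
  also have "(\<Sum>j\<le>N. if k \<le> j \<and> j < p then coeff h (j - k) * (-1) ^ j else 0)
      = (\<Sum>j\<in>{k..<p}. coeff h (j - k) * (-1) ^ j)"
  proof -
    have "{j \<in> {..N}. k \<le> j \<and> j < p} = {k..<p}" by (auto simp: N_def)
    then show ?thesis by (simp add: sum.inter_filter[symmetric])
  qed
  finally show ?thesis by (simp add: f_def)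
qed

lemma alt_binomial_prime_minus_1_cong:
  assumes "prime p" "i < p"
  shows "[(-1) ^ i * int ((p - 1) choose i) = 1] (mod int p)"
  using assms(2)
proof (induction i)
  case (Suc i)
  have "p \<ge> 2" using assms prime_ge_2_nat by blast
  have "p dvd (p choose Suc i)" using dvd_choose_prime[of "Suc i" p] Suc.prems assms by auto
  moreover have "p choose Suc i = ((p - 1) choose i) + ((p - 1) choose Suc i)"
    using binomial_Suc_Suc[of "p - 1" i] \<open>p \<ge> 2\<close> by simp
  ultimately have "int p dvd int ((p - 1) choose Suc i) + int ((p - 1) choose i)"
    by (metis add.commute int_dvd_int_iff of_nat_add)
  then have "[int ((p - 1) choose Suc i) = - int ((p - 1) choose i)] (mod int p)"
    by (simp add: cong_iff_dvd_diff)
  then have "[(-1) ^ Suc i * int ((p - 1) choose Suc i)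
      = (-1) ^ i * int ((p - 1) choose i)] (mod int p)"
    using cong_scalar_left[of _ _ _ "(-1) ^ Suc i"] by fastforce
  then show ?case using Suc.IH Suc.prems cong_trans by fastforce
qed simp

lemma Suc_mult_coeff_binom_quot_poly:
  assumes "prime p" "i < p - 1"
  shows "int (Suc i) * coeff (binom_quot_poly p) i = int ((p - 1) choose i)"
proof -
  have "p \<ge> 2" using assms prime_ge_2_nat by blast
  have "p dvd (p choose Suc i)" using dvd_choose_prime[of "Suc i" p] assms by auto
  then obtain c where c: "p choose Suc i = p * c" by blast
  have "Suc i * (p * c) = p * ((p - 1) choose i)"
    using times_binomial_minus1_eq[of "Suc i" p] c by simp
  then have "p * (Suc i * c) = p * ((p - 1) choose i)" by (simp only: mult.left_commute)
  then have "Suc i * c = (p - 1) choose i" using \<open>p \<ge> 2\<close> by (simp only: mult_left_cancel)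
  moreover have "coeff (binom_quot_poly p) i = int c"
    using c \<open>p \<ge> 2\<close> assms(2) by (simp add: coeff_binom_quot_poly)
  ultimately show ?thesis by (metis of_nat_mult)
qed

lemma coeff_power_mult_pderiv:
  fixes h :: "'a :: idom poly"
  assumes "e \<ge> 1"
  shows "of_nat (q + 1) * coeff (h ^ q * pderiv (monom 1 1 * h)) e
    = of_nat (q + 1 + e) * coeff (h ^ (q + 1)) e"
proof -
  have "h ^ q * pderiv (monom 1 1 * h) = h ^ (q + 1) + monom 1 1 * (h ^ q * pderiv h)"
    by (simp add: pderiv_mult pderiv_monom algebra_simps)
  then have "coeff (h ^ q * pderiv (monom 1 1 * h)) e
      = coeff (h ^ (q + 1)) e + coeff (h ^ q * pderiv h) (e - 1)"
    using assms by (simp add: coeff_monom_mult)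
  moreover have "of_nat (q + 1) * coeff (h ^ q * pderiv h) (e - 1)
      = of_nat e * coeff (h ^ (q + 1)) e"
    using coeff_pderiv[of "h ^ (q + 1)" "e - 1"] assms
    by (simp add: pderiv_power del: power_Suc)
  ultimately show ?thesis by (simp add: distrib_left distrib_right)
qed

lemma coeff_pderiv_reflected_binom_quot_poly_cong:
  assumes "prime p" "i < p - 1"
  shows "[coeff (pderiv (monom 1 1 * pcompose (binom_quot_poly p) (monom (-1) 1))) i = 1]
    (mod int p)"
proof -
  have "coeff (pderiv (monom 1 1 * pcompose (binom_quot_poly p) (monom (-1) 1))) i
      = (-1) ^ i * (int (Suc i) * coeff (binom_quot_poly p) i)"
    by (simp add: coeff_pderiv coeff_monom_mult)
  also have "\<dots> = (-1) ^ i * int ((p - 1) choose i)"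
    using Suc_mult_coeff_binom_quot_poly[OF assms] by simp
  finally show ?thesis using alt_binomial_prime_minus_1_cong[OF assms(1)] assms(2) by simp
qed

text \<open>Modulo \<open>p\<close>, \<open>h(X) = g(-X)\<close> for \<open>g\<close> the \<open>binom_quot_poly\<close> is the truncation of
  \<open>-log(1 - X)/X\<close>, so \<open>(X h)'\<close> is congruent to \<open>1/(1 - X)\<close> in low degrees: summing the
  coefficients of \<open>h ^ q\<close> up to \<open>e\<close> amounts to taking the \<open>e\<close>-th coefficient of
  \<open>h ^ q (X h)' = (X h) ^ (q + 1)' / (q + 1)\<close>, and this has the factor \<open>q + 1 + e\<close>.\<close>

lemma binom_quot_poly_power_coeff_sum_dvd:
  assumes "prime p" "1 \<le> k" "k + 2 \<le> p" "q mod p = k"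
  shows "int p dvd (\<Sum>j\<in>{k..<p}. coeff (binom_quot_poly p ^ q) (j - k) * (-1) ^ j)"
proof -
  define e where "e = p - 1 - k"
  define g where "g = binom_quot_poly p"
  define h where "h = pcompose g (monom (-1) 1)"
  have coeff_h: "coeff (h ^ n) i = (-1) ^ i * coeff (g ^ n) i" for n i
    unfolding h_def pcompose_power_left[symmetric] by simp
  have "{k..<p} = {0 + k..<(e + 1) + k}" using assms by (auto simp: e_def)
  then have "(\<Sum>j\<in>{k..<p}. coeff (g ^ q) (j - k) * (-1) ^ j)
      = (\<Sum>i\<in>{0..<e + 1}. coeff (g ^ q) (i + k - k) * (-1) ^ (i + k))"
    by (simp only: sum.shift_bounds_nat_ivl)
  also have "\<dots> = (\<Sum>i\<le>e. (-1) ^ k * coeff (h ^ q) i)"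
    by (intro sum.cong)
       (auto simp: coeff_h power_add atLeast0LessThan lessThan_Suc_atMost[symmetric])
  finally have sum_h: "(\<Sum>j\<in>{k..<p}. coeff (g ^ q) (j - k) * (-1) ^ j)
      = (-1) ^ k * (\<Sum>i\<le>e. coeff (h ^ q) i)"
    by (simp add: sum_distrib_left)
  define D where "D = pderiv (monom 1 1 * h)"
  have coeff_D: "[coeff D i = 1] (mod int p)" if "i < p - 1" for i
    unfolding D_def h_def g_def
    by (rule coeff_pderiv_reflected_binom_quot_poly_cong[OF assms(1) that])
  define Y where "Y = coeff (h ^ q * D) e"
  have "Y = (\<Sum>i\<le>e. coeff (h ^ q) i * coeff D (e - i))"
    by (simp add: Y_def coeff_mult)
  also have "[\<dots> = (\<Sum>i\<le>e. coeff (h ^ q) i * 1)] (mod int p)"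
    by (intro cong_sum cong_scalar_left coeff_D) (use assms in \<open>auto simp: e_def\<close>)
  finally have Y_cong: "[Y = (\<Sum>i\<le>e. coeff (h ^ q) i)] (mod int p)" by simp
  have "q + 1 + e = p * (q div p + 1)"
    using assms div_mult_mod_eq[of q p] by (simp add: e_def algebra_simps)
  then have "int p dvd int (q + 1) * Y"
    using coeff_power_mult_pderiv[of e q h] assms
    by (simp add: Y_def D_def e_def)
  moreover have "\<not> int p dvd int (q + 1)"
  proof -
    have "(q + 1) mod p = k + 1" using assms by (simp add: mod_Suc)
    then show ?thesis unfolding int_dvd_int_iff by (simp add: dvd_eq_mod_eq_0)
  qed
  ultimately have "int p dvd Y"
    using assms(1) by (simp add: prime_dvd_mult_iff)
  then have "int p dvd (\<Sum>i\<le>e. coeff (h ^ q) i)" using Y_cong by (simp add: cong_dvd_iff)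
  then show ?thesis unfolding g_def[symmetric] sum_h by simp
qed

lemma alt_binom_dvd_sum_factor:
  assumes "prime p" "odd p" "p dvd m" "m \<ge> 1" and v: "(p - 1) * v + digit_sum p m = m"
  shows "\<exists>T. alt_binom_dvd_sum p m = (- int p) ^ v * T
    \<and> [T = (if digit_sum p m = p - 1 then 1 else 0)] (mod int p)"
proof -
  have "p \<ge> 2" using assms prime_ge_2_nat by blast
  define s where "s = digit_sum p m"
  have "s \<ge> 1" unfolding s_def using digit_sum_pos[OF \<open>p \<ge> 2\<close>, of m] assms(4) by simp
  define T where "T = shifted_dvd_coeff_sum p (monom 1 s * binom_quot_poly p ^ v)"
  have "alt_binom_dvd_sum p m = (- int p) ^ v * T"
    using alt_binom_dvd_sum_reduce[OF assms(1) \<open>s \<ge> 1\<close>, of v] v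
    unfolding T_def s_def by (simp add: add.commute)
  moreover have T_cong:
    "[T = (\<Sum>j\<in>{s..<p}. coeff (binom_quot_poly p ^ v) (j - s) * (-1) ^ j)] (mod int p)"
    unfolding T_def by (rule shifted_dvd_coeff_sum_monom_mult_cong[OF assms(1) \<open>s \<ge> 1\<close>])
  have "[T = (if s = p - 1 then 1 else 0)] (mod int p)"
  proof (cases "s + 2 \<le> p")
    case True
    have "p * v = (p - 1) * v + v" using \<open>p \<ge> 2\<close> by (cases p) auto
    then have "p * v + s = m + v" using v unfolding s_def by linarith
    then have "(p * v + s) mod p = (m + v) mod p" by simp
    then have "s mod p = v mod p" using assms(3) by (simp add: mod_add_left_eq[symmetric])
    then have "v mod p = s" using True by simp
    then have "int p dvd (\<Sum>j\<in>{s..<p}. coeff (binom_quot_poly p ^ v) (j - s) * (-1) ^ j)"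
      using binom_quot_poly_power_coeff_sum_dvd[OF assms(1) \<open>s \<ge> 1\<close> True] by blast
    moreover have "s \<noteq> p - 1" using True by simp
    ultimately show ?thesis using T_cong by (simp add: cong_dvd_iff cong_0_iff)
  next
    case False
    show ?thesis
    proof (cases "s = p - 1")
      case True
      then have "{s..<p} = {p - 1}" using \<open>p \<ge> 2\<close> by auto
      moreover have "coeff (binom_quot_poly p) 0 = 1"
        using \<open>p \<ge> 2\<close> by (simp add: coeff_binom_quot_poly)
      moreover have "even (p - 1)" using assms(2) by simp
      ultimately show ?thesis using T_cong True by (simp add: coeff_0_power)
    next
      case False
      then have "{s..<p} = {}" using \<open>\<not> s + 2 \<le> p\<close> by auto
      then show ?thesis using T_cong False by simp
    qed
  qed
  ultimately show ?thesis unfolding s_def by blast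
qed

section \<open>The coefficients of \<open>exp_p p * exp_p_neg p\<close>\<close>

lemma coeff_exp_p_mult_exp_p_neg:
  "(exp_p p * exp_p_neg p) $ m = (if p dvd m then of_int (alt_binom_dvd_sum p m) / fact m else 0)"
proof -
  have "(exp_p p * exp_p_neg p) $ m = (\<Sum>i\<le>m. (if p dvd i then 1 / fact i else 0) *
        (if p dvd (m - i) then (-1) ^ (m - i) / fact (m - i) else 0))"
    by (simp add: fps_mult_nth exp_p_def exp_p_neg_def atLeast0AtMost)
  also have "\<dots> = (\<Sum>i\<le>m. if p dvd m \<and> p dvd i
      then (-1) ^ (m - i) * of_nat (m choose i) / fact m else 0)"
  proof (intro sum.cong refl)
    fix i assume "i \<in> {..m}"
    then have "i \<le> m" by simp
    show "(if p dvd i then 1 / fact i else 0)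
        * (if p dvd (m - i) then (-1) ^ (m - i) / fact (m - i) else 0)
      = (if p dvd m \<and> p dvd i then (-1) ^ (m - i) * of_nat (m choose i) / fact m else 0 :: rat)"
    proof (cases "p dvd m")
      case True
      then have "p dvd (m - i) \<longleftrightarrow> p dvd i" using \<open>i \<le> m\<close> by (metis dvd_diff_nat diff_diff_cancel)
      moreover have "of_nat (m choose i) = (fact m / (fact i * fact (m - i)) :: rat)"
        by (rule binomial_fact[OF \<open>i \<le> m\<close>])
      ultimately show ?thesis using True by (simp add: field_simps)
    next
      case False
      then have "\<not> (p dvd i \<and> p dvd (m - i))" using \<open>i \<le> m\<close> by (metis dvd_add le_add_diff_inverse)
      then show ?thesis using False by auto
    qed
  qed
  also have "\<dots> = (if p dvd m then of_int (alt_binom_dvd_sum p m) / fact m else 0)"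
  proof -
    have "of_int (alt_binom_dvd_sum p m)
        = (\<Sum>i\<le>m. if p dvd i then (-1) ^ (m - i) * of_nat (m choose i) else (0 :: rat))"
      unfolding alt_binom_dvd_sum_def of_int_sum by (intro sum.cong) auto
    then show ?thesis by (cases "p dvd m") (auto simp: sum_divide_distrib intro: sum.cong)
  qed
  finally show ?thesis .
qed

lemma coeff_exp_p_mult_exp_p_neg_frac:
  assumes "prime p" "odd p" "m \<ge> 1" "p dvd m"
  obtains a w where "(exp_p p * exp_p_neg p) $ m = of_int a / of_int w" "\<not> int p dvd w"
    and "[a * digit_fact p m = (if digit_sum p m = p - 1 then 1 else 0) * w] (mod int p)"
proof -
  have "p \<ge> 2" using assms prime_ge_2_nat by blast
  obtain v w where vw: "fact m = p ^ v * w" "(p - 1) * v + digit_sum p m = m"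
    and w_cong: "[int w = (-1) ^ v * int (digit_fact p m)] (mod int p)"
    using fact_prime_power_decomp[OF assms(1)] by blast
  obtain T where T: "alt_binom_dvd_sum p m = (- int p) ^ v * T"
    and T_cong: "[T = (if digit_sum p m = p - 1 then 1 else 0)] (mod int p)"
    using alt_binom_dvd_sum_factor[OF assms(1,2,4,3) vw(2)] by blast
  have "\<not> int p dvd int w"
  proof
    assume "int p dvd int w"
    then have "int p dvd (-1) ^ v * int (digit_fact p m)" using w_cong cong_dvd_iff by blast
    then have "p dvd digit_fact p m" by (simp add: minus_one_power_iff split: if_splits)
    then show False using prime_not_dvd_digit_fact[OF assms(1)] by blast
  qed
  have "(fact m :: rat) = of_nat (p ^ v * w)" by (metis vw(1) of_nat_fact)
  then have "(exp_p p * exp_p_neg p) $ m = of_int ((- int p) ^ v * T) / (of_nat (p ^ v * w) :: rat)"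
    using assms(4) T by (simp add: coeff_exp_p_mult_exp_p_neg)
  also have "\<dots> = (of_nat p) ^ v * of_int ((-1) ^ v * T) / ((of_nat p) ^ v * of_int (int w))"
    by (simp add: power_minus[of "int p"])
  also have "\<dots> = of_int ((-1) ^ v * T) / of_int (int w)"
    using \<open>p \<ge> 2\<close> by simp
  finally have G: "(exp_p p * exp_p_neg p) $ m = of_int ((-1) ^ v * T) / of_int (int w)" .
  have "[T * ((-1) ^ v * int (digit_fact p m))
      = (if digit_sum p m = p - 1 then 1 else 0) * int w] (mod int p)"
    using T_cong w_cong by (intro cong_mult) (auto simp: cong_sym)
  then have "[(-1) ^ v * T * int (digit_fact p m)
      = (if digit_sum p m = p - 1 then 1 else 0) * int w] (mod int p)"
    by (simp only: mult_ac)
  from that[OF G \<open>\<not> int p dvd int w\<close> this] show ?thesis .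
qed

definition residue_coeff :: "nat \<Rightarrow> nat \<Rightarrow> rat" where
  "residue_coeff p m = (if m = 0 then 1
     else if p dvd m \<and> digit_sum p m = p - 1 then 1 / of_nat (digit_fact p m) else 0)"

lemma coeff_exp_p_mult_exp_p_neg_cong:
  assumes "prime p" "odd p"
  shows "p_integral p ((exp_p p * exp_p_neg p) $ m)"
    and "p_integral p (((exp_p p * exp_p_neg p) $ m - residue_coeff p m) / of_nat p)"
proof -
  consider "m = 0" | "\<not> p dvd m" | "m \<ge> 1" "p dvd m" by (cases m) auto
  then have "p_integral p ((exp_p p * exp_p_neg p) $ m)
    \<and> p_integral p (((exp_p p * exp_p_neg p) $ m - residue_coeff p m) / of_nat p)"
  proof cases
    case 1
    then have "(exp_p p * exp_p_neg p) $ m = 1" "residue_coeff p m = 1"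
      using coeff_exp_p_mult_exp_p_neg[of p m] by (simp_all add: residue_coeff_def)
    then show ?thesis using p_integral_of_int[OF assms(1), of 1] p_integral_0[OF assms(1)] by simp
  next
    case 2
    then have "m \<noteq> 0" by (metis dvd_0_right)
    then have "(exp_p p * exp_p_neg p) $ m = 0" "residue_coeff p m = 0"
      using 2 coeff_exp_p_mult_exp_p_neg[of p m] by (simp_all add: residue_coeff_def)
    then show ?thesis using p_integral_0[OF assms(1)] by simp
  next
    case 3
    obtain a w where G: "(exp_p p * exp_p_neg p) $ m = of_int a / of_int w"
      and w: "\<not> int p dvd w"
      and cong: "[a * digit_fact p m = (if digit_sum p m = p - 1 then 1 else 0) * w] (mod int p)"
      by (rule coeff_exp_p_mult_exp_p_neg_frac[OF assms 3])
    define c where "c = (if digit_sum p m = p - 1 then 1 else 0 :: int)"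
    define D where "D = int (digit_fact p m)"
    have D: "\<not> int p dvd D"
      using prime_not_dvd_digit_fact[OF assms(1)] by (simp add: D_def)
    have K: "residue_coeff p m = of_int c / of_int D"
      using 3 by (simp add: residue_coeff_def c_def D_def)
    from cong have "[a * D = c * w] (mod int p)" unfolding c_def D_def .
    then show ?thesis unfolding G K
      using p_integral_frac[OF w] p_integral_diff_frac_div[OF assms(1) w D] by blast
  qed
  then show "p_integral p ((exp_p p * exp_p_neg p) $ m)"
    and "p_integral p (((exp_p p * exp_p_neg p) $ m - residue_coeff p m) / of_nat p)"
    by blast+
qed

section \<open>Summing over the powers of \<open>p\<close>\<close>

lemma coeff_mult_pow_series:
  assumes "p \<ge> 2"
  shows "(f * pow_series p) $ n = (\<Sum>i | 1 \<le> i \<and> p ^ i \<le> n. f $ (n - p ^ i))"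
proof -
  have "(f * pow_series p) $ n = (\<Sum>j | j \<le> n \<and> (\<exists>i\<ge>1. n - j = p ^ i). f $ j)"
    by (simp add: fps_mult_nth pow_series_def atLeast0AtMost sum.inter_filter[symmetric]
        if_distrib cong: if_cong)
  also have "{j. j \<le> n \<and> (\<exists>i\<ge>1. n - j = p ^ i)} = (\<lambda>i. n - p ^ i) ` {i. 1 \<le> i \<and> p ^ i \<le> n}"
    by (force simp: image_iff)
  also have "(\<Sum>j\<in>(\<lambda>i. n - p ^ i) ` {i. 1 \<le> i \<and> p ^ i \<le> n}. f $ j)
      = (\<Sum>i | 1 \<le> i \<and> p ^ i \<le> n. f $ (n - p ^ i))"
  proof (rule sum.reindex_cong[OF _ refl refl])
    show "inj_on (\<lambda>i. n - p ^ i) {i. 1 \<le> i \<and> p ^ i \<le> n}"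
    proof (rule inj_onI)
      fix x y
      assume "x \<in> {i. 1 \<le> i \<and> p ^ i \<le> n}" "y \<in> {i. 1 \<le> i \<and> p ^ i \<le> n}"
        and "n - p ^ x = n - p ^ y"
      then have "p ^ x = p ^ y" by (metis diff_diff_cancel mem_Collect_eq)
      then show "x = y" using assms by simp
    qed
  qed
  finally show ?thesis .
qed

lemma residue_coeff_sum_not_dvd:
  assumes "p \<ge> 2" "\<not> p dvd n"
  shows "(\<Sum>i | 1 \<le> i \<and> p ^ i \<le> n. residue_coeff p (n - p ^ i)) = 0"
proof (intro sum.neutral ballI)
  fix i assume i: "i \<in> {i. 1 \<le> i \<and> p ^ i \<le> n}"
  then have "p dvd p ^ i" by (simp add: dvd_power)
  have "\<not> p dvd (n - p ^ i)"
  proof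
    assume "p dvd (n - p ^ i)"
    then have "p dvd (n - p ^ i) + p ^ i" using \<open>p dvd p ^ i\<close> by simp
    then show False using assms(2) i by simp
  qed
  then have "n - p ^ i \<noteq> 0" by auto
  with \<open>\<not> p dvd (n - p ^ i)\<close> show "residue_coeff p (n - p ^ i) = 0" by (simp add: residue_coeff_def)
qed

lemma residue_coeff_sum_prime_power:
  assumes "p \<ge> 2" "j \<ge> 1"
  shows "(\<Sum>i | 1 \<le> i \<and> p ^ i \<le> p ^ j. residue_coeff p (p ^ j - p ^ i))
    = 1 + (if j \<ge> 2 then 1 / fact (p - 1) else 0)"
proof -
  have summand: "residue_coeff p (p ^ j - p ^ i)
      = (if i = j then 1 else if Suc i = j then 1 / fact (p - 1) else 0)"
    if "i \<in> {1..j}" for i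
  proof (cases "i = j")
    case False
    with that have "i < j" by simp
    then have "p ^ j - p ^ i \<noteq> 0" "p dvd p ^ j - p ^ i"
      using assms that by (auto simp: power_strict_increasing_iff dvd_power intro!: dvd_diff_nat)
    moreover have "digit_sum p (p ^ j - p ^ i) = p - 1 \<longleftrightarrow> Suc i = j"
      using assms \<open>i < j\<close> digit_sum_power_diff[of p i j] by (auto simp: Suc_leI)
    moreover have "digit_fact p (p ^ Suc i - p ^ i) = fact (p - 1)"
      by (rule digit_fact_power_Suc_diff[OF assms(1)])
    ultimately show ?thesis using False by (auto simp: residue_coeff_def)
  qed (simp add: residue_coeff_def)
  have "{i. 1 \<le> i \<and> p ^ i \<le> p ^ j} = {1..j}" using assms by auto
  then have "(\<Sum>i | 1 \<le> i \<and> p ^ i \<le> p ^ j. residue_coeff p (p ^ j - p ^ i))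
      = (\<Sum>i\<in>{1..j}. (if i = j then 1 else 0) + (if i = j - 1 then 1 / fact (p - 1) else 0))"
    using summand by (auto intro!: sum.cong)
  also have "\<dots> = 1 + (if j \<ge> 2 then 1 / fact (p - 1) else 0)"
    using assms by (simp add: sum.distrib sum.delta') linarith
  finally show ?thesis .
qed

lemma sum_digits_power_le:
  assumes "p \<ge> 2" "p dvd n"
  shows "(\<Sum>i | 1 \<le> i \<and> p ^ i \<le> n. digit p i n) = digit_sum p n"
proof -
  have "n < 2 ^ n" by (rule less_exp)
  also have "(2::nat) ^ n \<le> p ^ n" using assms(1) by (rule power_mono) simp
  finally have "n < p ^ n" .
  then have "digit_sum p n = (\<Sum>i<n. digit p i n)"
    by (rule digit_sum_eq_sum_digits)
  also have "\<dots> = (\<Sum>i | 1 \<le> i \<and> p ^ i \<le> n. digit p i n)"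
  proof (rule sum.mono_neutral_right)
    show "{i. 1 \<le> i \<and> p ^ i \<le> n} \<subseteq> {..<n}"
    proof
      fix i assume "i \<in> {i. 1 \<le> i \<and> p ^ i \<le> n}"
      then have "p ^ i < p ^ n" using \<open>n < p ^ n\<close> by simp
      then show "i \<in> {..<n}" using assms(1) by simp
    qed
    show "\<forall>i\<in>{..<n} - {i. 1 \<le> i \<and> p ^ i \<le> n}. digit p i n = 0"
    proof
      fix i assume "i \<in> {..<n} - {i. 1 \<le> i \<and> p ^ i \<le> n}"
      then consider "i = 0" | "\<not> p ^ i \<le> n" by fastforce
      then show "digit p i n = 0"
        using assms(2) digit_nonzero_imp_power_le[of p i n] by cases (simp_all add: digit_def)
    qed
  qed simp
  finally show ?thesis ..
qed

lemma residue_coeff_diff_power: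
  assumes "p \<ge> 2" "p dvd n" "digit_sum p n \<ge> 2" "1 \<le> i" "p ^ i \<le> n"
  shows "residue_coeff p (n - p ^ i)
    = (if digit_sum p n = p then of_nat (digit p i n) / of_nat (digit_fact p n) else 0)"
proof -
  have "n \<noteq> p ^ i" using assms(3) digit_sum_power[OF assms(1)] by auto
  then have "n - p ^ i \<noteq> 0" using assms(5) by simp
  moreover have "p dvd n - p ^ i"
    using assms(4) by (intro dvd_diff_nat assms(2) dvd_power) auto
  moreover have "digit_fact p (n - p ^ i) \<noteq> 0"
    using digit_fact_gt_0[of p "n - p ^ i"] by simp
  ultimately show ?thesis
  proof (cases "digit p i n = 0")
    case True
    then have "digit_sum p (n - p ^ i) \<noteq> p - 1"
      using digit_sum_diff_power_zero_digit[OF assms(1,5)] assms(3) by force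
    then show ?thesis using True \<open>n - p ^ i \<noteq> 0\<close> by (simp add: residue_coeff_def)
  next
    case False
    note digits = digit_sum_fact_diff_power_nonzero_digit[OF assms(1) False]
    then have "digit_sum p (n - p ^ i) = p - 1 \<longleftrightarrow> digit_sum p n = p" using assms(1) by auto
    moreover have "of_nat (digit p i n) / of_nat (digit_fact p n)
        = (1 / of_nat (digit_fact p (n - p ^ i)) :: rat)"
      using digits(2) False by simp
    ultimately show ?thesis using \<open>n - p ^ i \<noteq> 0\<close> \<open>p dvd n - p ^ i\<close>
      by (simp add: residue_coeff_def)
  qed
qed

lemma residue_coeff_sum_digit_sum_ge_2:
  assumes "p \<ge> 2" "p dvd n" "digit_sum p n \<ge> 2"
  shows "(\<Sum>i | 1 \<le> i \<and> p ^ i \<le> n. residue_coeff p (n - p ^ i))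
    = (if digit_sum p n = p then of_nat p / of_nat (digit_fact p n) else 0)"
proof -
  have "(\<Sum>i | 1 \<le> i \<and> p ^ i \<le> n. residue_coeff p (n - p ^ i))
      = (\<Sum>i | 1 \<le> i \<and> p ^ i \<le> n. if digit_sum p n = p
          then of_nat (digit p i n) / of_nat (digit_fact p n) else 0)"
    using assms by (intro sum.cong) (simp_all add: residue_coeff_diff_power)
  also have "\<dots> = (if digit_sum p n = p
      then of_nat (\<Sum>i | 1 \<le> i \<and> p ^ i \<le> n. digit p i n) / of_nat (digit_fact p n) else 0)"
    by (simp add: sum_divide_distrib)
  finally show ?thesis using sum_digits_power_le[OF assms(1,2)] by simp
qed

lemma p_integral_wilson:
  assumes "prime p"
  shows "p_integral p ((1 + 1 / fact (p - 1)) / of_nat p)"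
proof -
  define F where "F = (fact (p - 1) :: nat)"
  have "p > 0" using assms by (simp add: prime_gt_0_nat)
  then have "\<not> p dvd F" using assms by (simp add: F_def prime_dvd_fact_iff)
  then have "\<not> int p dvd int F" by simp
  have "[int F = -1] (mod int p)" using wilson_theorem[OF assms] by (simp add: F_def)
  then have "int p dvd int F + 1" by (simp add: cong_iff_dvd_diff cong_sym_eq)
  then obtain c where c: "int F + 1 = int p * c" by blast
  have "(1 + 1 / fact (p - 1)) / of_nat p = of_int (int F + 1) / (of_nat F * of_nat p :: rat)"
    by (simp add: F_def field_simps)
  also have "\<dots> = of_int c / of_int (int F)"
    using \<open>p > 0\<close> unfolding c by simp
  finally show ?thesis using p_integral_frac[OF \<open>\<not> int p dvd int F\<close>] by simp
qed

lemma residue_coeff_sum_cong: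
  assumes "prime p"
  shows "p_integral p (((\<Sum>i | 1 \<le> i \<and> p ^ i \<le> n. residue_coeff p (n - p ^ i))
    - (if n = p then 1 else 0)) / of_nat p)"
proof -
  have "p \<ge> 2" using assms prime_ge_2_nat by blast
  consider "\<not> p dvd n" | "n = 0" | "p dvd n" "digit_sum p n = 1" | "p dvd n" "digit_sum p n \<ge> 2"
    using digit_sum_pos[OF \<open>p \<ge> 2\<close>, of n] by fastforce
  then show ?thesis
  proof cases
    case 1
    then have "n \<noteq> p" by auto
    then show ?thesis
      using residue_coeff_sum_not_dvd[OF \<open>p \<ge> 2\<close> 1] p_integral_0[OF assms(1)] by simp
  next
    case 2
    then have "{i. 1 \<le> i \<and> p ^ i \<le> n} = {}" using \<open>p \<ge> 2\<close> by auto
    then show ?thesis using 2 \<open>p \<ge> 2\<close> p_integral_0[OF assms(1)] by simp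
  next
    case 3
    then obtain j where n: "n = p ^ j" using digit_sum_eq_1_imp_power[OF \<open>p \<ge> 2\<close>] by blast
    have "j \<ge> 1" using 3 n \<open>p \<ge> 2\<close> by (cases j) auto
    show ?thesis
    proof (cases "j \<ge> 2")
      case False
      then have "j = 1" using \<open>j \<ge> 1\<close> by simp
      then have "n = p" using n by simp
      then show ?thesis using residue_coeff_sum_prime_power[OF \<open>p \<ge> 2\<close> \<open>j \<ge> 1\<close>] False n
          p_integral_0[OF assms(1)] by simp
    next
      case True
      then have "n \<noteq> p" using n \<open>p \<ge> 2\<close> power_inject_exp[of p j 1] by auto
      then show ?thesis
        using residue_coeff_sum_prime_power[OF \<open>p \<ge> 2\<close> \<open>j \<ge> 1\<close>] True n
          p_integral_wilson[OF assms(1)]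
        by simp
    qed
  next
    case 4
    then have "n \<noteq> p" using digit_sum_power[OF \<open>p \<ge> 2\<close>, of 1] by auto
    have "\<not> int p dvd int (digit_fact p n)"
      using prime_not_dvd_digit_fact[OF assms(1)] by simp
    moreover have "((\<Sum>i | 1 \<le> i \<and> p ^ i \<le> n. residue_coeff p (n - p ^ i))
        - (if n = p then 1 else 0)) / of_nat p
      = of_int (if digit_sum p n = p then 1 else 0) / of_int (int (digit_fact p n))"
      using residue_coeff_sum_digit_sum_ge_2[OF \<open>p \<ge> 2\<close> 4] \<open>n \<noteq> p\<close> \<open>p \<ge> 2\<close> by simp
    ultimately show ?thesis using p_integral_frac by metis
  qed
qed

theorem proposition1p3:
  fixes p :: nat
  assumes "prime p" and "odd p"
  defines "F \<equiv> exp_p p * exp_p_neg p * pow_series p"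
  shows "(\<forall>n. p_integral p (fps_nth F n))
       \<and> (\<forall>n. p_integral p ((fps_nth F n - fps_nth (fps_X ^ p) n) / of_nat p))"
proof -
  have "p \<ge> 2" using assms prime_ge_2_nat by blast
  define G where "G = exp_p p * exp_p_neg p"
  have F_coeff: "F $ n = (\<Sum>i | 1 \<le> i \<and> p ^ i \<le> n. G $ (n - p ^ i))" for n
    unfolding F_def G_def by (rule coeff_mult_pow_series[OF \<open>p \<ge> 2\<close>])
  have "p_integral p (F $ n)" for n
    unfolding F_coeff G_def
    by (intro p_integral_sum[OF assms(1)] coeff_exp_p_mult_exp_p_neg_cong(1)[OF assms(1,2)])
  moreover have "p_integral p ((F $ n - (fps_X ^ p) $ n) / of_nat p)" for n
  proof -
    have "(F $ n - (fps_X ^ p) $ n) / of_nat p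
      = (\<Sum>i | 1 \<le> i \<and> p ^ i \<le> n. (G $ (n - p ^ i) - residue_coeff p (n - p ^ i)) / of_nat p)
        + ((\<Sum>i | 1 \<le> i \<and> p ^ i \<le> n. residue_coeff p (n - p ^ i)) - (if n = p then 1 else 0))
          / of_nat p"
      by (simp add: F_coeff fps_X_power_nth sum_subtractf add_divide_distrib[symmetric]
          sum_divide_distrib[symmetric])
    then show ?thesis
      using coeff_exp_p_mult_exp_p_neg_cong(2)[OF assms(1,2)] residue_coeff_sum_cong[OF assms(1)]
      by (simp add: G_def p_integral_add[OF assms(1)] p_integral_sum[OF assms(1)])
  qed
  ultimately show ?thesis by blast
qed

end
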